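(* Let $A\in\mathbb{R}^{n\times n}$ be symmetric with $r:=\mathrm{rank}(A)\ge 1$. Let $\epsilon\ge 0$, and let $S$ be an ordered subset of $r$ elements of $\{1,\dots,n\}$ such that $A[S]$ is a $(1+\epsilon)$-local maximizer for the absolute determinant on the set of $r\times r$ nonsingular principal submatrices of $A$. Let $H\in\mathbb{R}^{n\times n}$ be the matrix that is zero except that its submatrix with row/column indices $S$ equals $A[S]^{-1}$. Then $H$ is a symmetric reflexive generalized inverse of $A$ having at most $r^2$ nonzero entries, and $\|H\|_1\le r^2(1+\epsilon)\|H^r_{opt}\|_1$, where $H^r_{opt}$ is a symmetric reflexive generalized inverse of $A$ of minimum 1-norm.
   Context: $A[S]$ denotes the principal submatrix of $A$ with row/column indices $S$. $\|H\|_1=\sum_{i,j}|H_{ij}|$. A matrix $H$ is a generalized inverse of $A$ if $AHA=A$, and a reflexive generalized inverse if in addition $HAH=H$. For fixed $\epsilon\ge 0$ and an ordered $r$-subset $S$ of $\{1,\dots,n\}$, $A[S]$ is a $(1+\epsilon)$-local maximizer for the absolute determinant on the set of $r\times r$ nonsingular principal submatrices of $A$ if $|\det(A[S])|>0$ and $|\det(A[S])|$ cannot be increased by a factor of more than $1+\epsilon$ by swapping an element of $S$ with one element from its complement. *)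

theory Defs
  imports "HOL-Analysis.Analysis"
begin

text \<open>Determinant of the principal submatrix M[S] (Leibniz formula over the index set S;
  the absolute value does not depend on how S is ordered).\<close>
definition principal_det :: "real^'n^'n \<Rightarrow> 'n set \<Rightarrow> real" where
  "principal_det M S = (\<Sum>p\<in>{p. p permutes S}. of_int (sign p) * (\<Prod>i\<in>S. M $ i $ p i))"

definition entry_norm1 :: "real^'n^'m \<Rightarrow> real" where
  "entry_norm1 H = (\<Sum>i\<in>UNIV. \<Sum>j\<in>UNIV. \<bar>H $ i $ j\<bar>)"

definition is_ginv :: "real^'n^'n \<Rightarrow> real^'n^'n \<Rightarrow> bool" where
  "is_ginv A H \<longleftrightarrow> A ** H ** A = A"

definition is_reflexive_ginv :: "real^'n^'n \<Rightarrow> real^'n^'n \<Rightarrow> bool" where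
  "is_reflexive_ginv A H \<longleftrightarrow> is_ginv A H \<and> H ** A ** H = H"

definition local_max_det :: "real \<Rightarrow> real^'n^'n \<Rightarrow> 'n set \<Rightarrow> bool" where
  "local_max_det eps A S \<longleftrightarrow> \<bar>principal_det A S\<bar> > 0 \<and>
     (\<forall>i\<in>S. \<forall>j. j \<notin> S \<longrightarrow>
        \<bar>principal_det A (insert j (S - {i}))\<bar> \<le> (1 + eps) * \<bar>principal_det A S\<bar>)"

end

theory Submission
  imports Defs
begin

(* Write W = A H. The rows of A indexed by S are mapped by H to unit vectors, so they are
   independent; there are rank A of them, so they span the row space, and each is fixed by H A:
   hence A H A = A. Symmetry of A turns H^T A H = H^T into H = H^T and H A H = H, so A = W A W^T.
   Exchanging i in S for k outside S therefore multiplies det A[S] by W_ki^2, and local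
   maximality gives W_ki^2 <= 1 + eps. Finally, for any generalized inverse G,
   H = H A G A H = W^T G W, so each of the at most r^2 nonzero entries of H is bounded by
   (1 + eps) times the 1-norm of G. *)

lemma matrix_mult_row: "(A ** B) $ i = A $ i v* B"
  by (simp add: matrix_matrix_mult_def vector_matrix_mult_def vec_eq_iff)

lemma inj_on_rows_if_right_inverse:
  assumes right_inv: "\<And>i j. i \<in> S \<Longrightarrow> (A ** H) $ i $ j = (if i = j then 1 else 0)"
  shows "inj_on (($) A) S"
proof (rule inj_onI)
  fix i j assume "i \<in> S" "j \<in> S" "A $ i = A $ j"
  then have "(A ** H) $ i $ i = (A ** H) $ j $ i"
    by (simp add: matrix_mult_row)
  with \<open>i \<in> S\<close> \<open>j \<in> S\<close> show "i = j"
    by (simp add: right_inv split: if_splits)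
qed

lemma independent_rows_if_right_inverse:
  fixes A :: "real^'n^'m" and H :: "real^'m^'n"
  assumes right_inv: "\<And>i j. i \<in> S \<Longrightarrow> (A ** H) $ i $ j = (if i = j then 1 else 0)"
  shows "independent (($) A ` S)"
proof (rule independent_if_scalars_zero)
  have linear_mult: "linear (\<lambda>x. x v* H)"
    by (simp flip: transpose_matrix_vector)
  fix c x assume sum0: "(\<Sum>y\<in>($) A ` S. c y *\<^sub>R y) = 0" and "x \<in> ($) A ` S"
  then obtain j where j: "j \<in> S" "x = A $ j"
    by auto
  have "0 = ((\<Sum>i\<in>S. c (A $ i) *\<^sub>R A $ i) v* H) $ j"
    using sum0 by (simp add: sum.reindex[OF inj_on_rows_if_right_inverse[OF right_inv]])
  also have "\<dots> = (\<Sum>i\<in>S. c (A $ i) * (A ** H) $ i $ j)"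
    by (simp add: linear_sum[OF linear_mult] linear_cmul[OF linear_mult] matrix_mult_row
        sum_component)
  also have "\<dots> = (\<Sum>i\<in>S. if i = j then c (A $ i) else 0)"
    by (intro sum.cong) (auto simp: right_inv)
  finally show "c x = 0"
    using j by (simp add: sum.delta')
qed simp

lemma ginv_if_right_inverse_on_rank_rows:
  fixes A :: "real^'n^'m" and H :: "real^'m^'n" and S :: "'m set"
  assumes right_inv: "\<And>i j. i \<in> S \<Longrightarrow> (A ** H) $ i $ j = (if i = j then 1 else 0)"
    and card_S: "card S = rank A"
  shows "A ** H ** A = A"
proof -
  note inj = inj_on_rows_if_right_inverse[OF right_inv]
  have "rows A \<subseteq> span (($) A ` S)"
    using card_eq_dim[of "($) A ` S" "rows A"] independent_rows_if_right_inverse[OF right_inv]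
      card_S
    by (auto simp: rows_def row_def vec_lambda_eta row_rank_def card_image[OF inj])
  moreover have "subspace {x. x v* (H ** A) = x}"
    by (auto simp: subspace_def vector_matrix_left_distrib scaleR_vector_matrix_assoc)
  moreover have "A $ i v* (H ** A) = A $ i" if "i \<in> S" for i
  proof -
    have "A $ i v* (H ** A) = (A ** H) $ i v* A"
      by (simp add: matrix_mult_row vector_matrix_mul_assoc)
    also have "\<dots> = A $ i"
      using that by (simp add: vector_matrix_mult_def vec_eq_iff right_inv of_bool_def[symmetric])
    finally show ?thesis .
  qed
  ultimately have "A $ i v* (H ** A) = A $ i" for i
    using span_minimal[of "($) A ` S" "{x. x v* (H ** A) = x}"]
    by (force simp: rows_def row_def vec_lambda_eta)
  then show ?thesis
    by (simp add: vec_eq_iff matrix_mult_row flip: matrix_mul_assoc)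
qed

definition pad_identity :: "'n set \<Rightarrow> real^'n^'n \<Rightarrow> real^'n^'n" where
  "pad_identity S M = (\<chi> a b. if a \<in> S \<and> b \<in> S then M $ a $ b else if a = b then 1 else 0)"

lemma principal_det_eq_det_pad_identity: "principal_det M S = det (pad_identity S M)"
proof -
  let ?term = "\<lambda>p. of_int (sign p) * (\<Prod>a\<in>UNIV. pad_identity S M $ a $ p a)"
  have "det (pad_identity S M) = sum ?term {p. p permutes UNIV}"
    by (simp add: det_def)
  also have "\<dots> = sum ?term {p. p permutes S}"
  proof (rule sum.mono_neutral_right)
    show "\<forall>p\<in>{p. p permutes UNIV} - {p. p permutes S}. ?term p = 0"
    proof
      fix p assume "p \<in> {p. p permutes UNIV} - {p. p permutes S}"
      then obtain a where "a \<notin> S" "p a \<noteq> a"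
        by (auto simp: permutes_def)
      then have "pad_identity S M $ a $ p a = 0"
        by (simp add: pad_identity_def)
      then show "?term p = 0"
        by (simp add: prod_zero_iff) blast
    qed
  qed (auto simp: finite_permutations permutes_subset)
  also have "\<dots> = principal_det M S"
    unfolding principal_det_def
  proof (rule sum.cong[OF refl])
    fix p assume "p \<in> {p. p permutes S}"
    then have p: "p permutes S" by simp
    have "(\<Prod>a\<in>UNIV. pad_identity S M $ a $ p a) = (\<Prod>a\<in>S. pad_identity S M $ a $ p a)"
      using p by (intro prod.mono_neutral_right) (auto simp: pad_identity_def permutes_not_in)
    also have "\<dots> = (\<Prod>a\<in>S. M $ a $ p a)"
      using p by (intro prod.cong) (auto simp: pad_identity_def permutes_in_image)
    finally show "?term p = of_int (sign p) * (\<Prod>a\<in>S. M $ a $ p a)"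
      by simp
  qed
  finally show ?thesis ..
qed

lemma det_identity_with_row:
  fixes c :: "real^'n"
  shows "det ((\<chi> a b. if a = i then c $ b else mat 1 $ a $ b) :: real^'n^'n) = c $ i"
proof -
  have "det ((\<chi> a b. if a = i then c $ b else mat 1 $ a $ b) :: real^'n^'n)
      = det ((\<chi> a b. if b = i then c $ a else mat 1 $ a $ b) :: real^'n^'n)"
    by (subst det_transpose[symmetric])
      (rule arg_cong[where f=det], auto simp: transpose_def mat_def vec_eq_iff)
  also have "\<dots> = c $ i"
    using cramer_lemma[where A="mat 1 :: real^'n^'n" and k=i and x=c]
    by (simp only: matrix_vector_mul_lid det_I mult_1_right)
  finally show ?thesis .
qed

lemma transpose_pad_identity: "transpose (pad_identity S M) = pad_identity S (transpose M)"
  by (auto simp: pad_identity_def transpose_def vec_eq_iff)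

lemma pad_identity_mult:
  "pad_identity S X ** pad_identity S Y = pad_identity S (\<chi> a b. \<Sum>m\<in>S. X $ a $ m * Y $ m $ b)"
  (is "?lhs = pad_identity S ?XY")
proof -
  have "?lhs $ a $ b = pad_identity S ?XY $ a $ b" for a b
  proof (cases "a \<in> S")
    case True
    have "?lhs $ a $ b = (\<Sum>m\<in>UNIV. if m \<in> S then X $ a $ m * pad_identity S Y $ m $ b else 0)"
      unfolding matrix_matrix_mult_def vec_lambda_beta using True
      by (intro sum.cong) (auto simp: pad_identity_def)
    also have "\<dots> = (\<Sum>m\<in>S. X $ a $ m * pad_identity S Y $ m $ b)"
      by (simp add: sum.If_cases)
    also have "\<dots> = pad_identity S ?XY $ a $ b"
      using True by (cases "b \<in> S") (auto simp: pad_identity_def intro!: sum.neutral)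
    finally show ?thesis .
  next
    case False
    have "?lhs $ a $ b = (\<Sum>m\<in>UNIV. if m = a then pad_identity S Y $ a $ b else 0)"
      unfolding matrix_matrix_mult_def vec_lambda_beta using False
      by (intro sum.cong) (auto simp: pad_identity_def)
    then show ?thesis
      using False by (simp add: pad_identity_def)
  qed
  then show ?thesis
    by (simp add: vec_eq_iff)
qed

lemma det_pad_identity_permute:
  assumes "p permutes (UNIV :: 'n set)"
  shows "det (pad_identity S (\<chi> a b. M $ p a $ p b))
    = det (pad_identity (p ` S) (M :: real^'n^'n))"
proof -
  let ?X = "pad_identity (p ` S) M"
  have "pad_identity S (\<chi> a b. M $ p a $ p b) = (\<chi> a b. (\<chi> a. ?X $ p a) $ a $ p b)"
    using permutes_inj[OF assms]
    by (simp add: pad_identity_def vec_eq_iff inj_image_mem_iff inj_eq)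
  also have "det \<dots> = of_int (sign p * sign p) * det ?X"
    by (simp only: det_permute_columns[OF assms] det_permute_rows[OF assms] of_int_mult
        mult.assoc)
  finally show ?thesis
    by simp
qed

lemma principal_det_exchange:
  fixes A W :: "real^'n^'n"
  assumes factor: "A = W ** A ** transpose W"
    and rows_in: "\<And>a b. a \<in> S \<Longrightarrow> W $ a $ b = (if a = b then 1 else 0)"
    and cols_out: "\<And>a b. b \<notin> S \<Longrightarrow> W $ a $ b = 0"
    and i: "i \<in> S" and k: "k \<notin> S"
  shows "principal_det A (insert k (S - {i})) = (W $ k $ i)^2 * principal_det A S"
proof -
  have sum_S: "(\<Sum>m\<in>UNIV. W $ x $ m * f m) = (\<Sum>m\<in>S. W $ x $ m * f m)"
    for x and f :: "'n \<Rightarrow> real"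
    by (rule sum.mono_neutral_right) (auto simp: cols_out)
  have entry: "A $ x $ y = (\<Sum>m'\<in>S. (\<Sum>m\<in>S. W $ x $ m * A $ m $ m') * W $ y $ m')" for x y
  proof -
    have "A $ x $ y = (\<Sum>m'\<in>UNIV. W $ y $ m' * (\<Sum>m\<in>UNIV. W $ x $ m * A $ m $ m'))"
      by (subst factor) (simp add: matrix_matrix_mult_def transpose_def mult.commute)
    also have "\<dots> = (\<Sum>m'\<in>S. W $ y $ m' * (\<Sum>m\<in>S. W $ x $ m * A $ m $ m'))"
      by (simp only: sum_S)
    finally show ?thesis
      by (simp add: mult.commute)
  qed
  text \<open>Conjugation by the transposition of i and k turns A[insert k (S - {i})] into
    Ws[S] A[S] Ws[S]^T, where Ws[S] is the identity with row i replaced by row k of W.\<close>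
  define s where "s = Transposition.transpose i k"
  have s: "s permutes UNIV"
    unfolding s_def by (rule permutes_swap_id) auto
  have s_i: "s i = k"
    by (simp add: s_def)
  have s_other: "s a = a" if "a \<in> S" "a \<noteq> i" for a
    unfolding s_def using that k by (intro transpose_apply_other) auto
  define Ws where "Ws = (\<chi> a b. W $ s a $ b)"
  have "(\<chi> a b. A $ s a $ s b)
      = (\<chi> a b. \<Sum>m'\<in>S.
          (\<chi> a b. \<Sum>m\<in>S. Ws $ a $ m * A $ m $ b) $ a $ m' * transpose Ws $ m' $ b)"
    unfolding vec_eq_iff Ws_def transpose_def vec_lambda_beta by (intro allI) (rule entry)
  then have "pad_identity S (\<chi> a b. A $ s a $ s b)
      = pad_identity S Ws ** pad_identity S A ** transpose (pad_identity S Ws)"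
    by (simp add: pad_identity_mult transpose_pad_identity)
  then have "det (pad_identity S (\<chi> a b. A $ s a $ s b))
      = det (pad_identity S Ws)^2 * det (pad_identity S A)"
    by (simp add: det_mul det_transpose power2_eq_square)
  moreover have "pad_identity S Ws
      = (\<chi> a b. if a = i then (\<chi> b. if b \<in> S then W $ k $ b else 0) $ b else mat 1 $ a $ b)"
    using i by (auto simp: vec_eq_iff pad_identity_def Ws_def s_i s_other rows_in mat_def)
  then have "det (pad_identity S Ws) = W $ k $ i"
    using i by (simp add: det_identity_with_row)
  moreover have "s ` S = insert k (S - {i})"
    using i k
    by (auto simp: s_def set_eq_iff in_transpose_image_iff Transposition.transpose_def)
  ultimately show ?thesis
    by (simp add: principal_det_eq_det_pad_identity det_pad_identity_permute[OF s])
qed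

lemma abs_mult_le_of_squares_le:
  fixes a b c :: real
  assumes "a^2 \<le> c" "b^2 \<le> c"
  shows "\<bar>a\<bar> * \<bar>b\<bar> \<le> c"
proof -
  have c: "0 \<le> c"
    using assms(1) zero_le_power2 order_trans by blast
  have "(\<bar>a\<bar> * \<bar>b\<bar>)^2 \<le> c^2"
    using assms c by (simp add: power_mult_distrib power2_eq_square[of c] mult_mono)
  then show ?thesis
    using c by (rule power2_le_imp_le)
qed

lemma abs_congruence_entry_le:
  fixes W :: "real^'n^'m" and G :: "real^'m^'m"
  assumes W: "\<And>k l. (W $ k $ l)^2 \<le> c"
  shows "\<bar>(transpose W ** G ** W) $ i $ j\<bar> \<le> c * entry_norm1 G"
proof -
  have "(transpose W ** G ** W) $ i $ j
      = (\<Sum>l\<in>UNIV. \<Sum>k\<in>UNIV. W $ k $ i * G $ k $ l * W $ l $ j)"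
    by (simp add: matrix_matrix_mult_def transpose_def sum_distrib_right)
  also have "\<bar>\<dots>\<bar>
      \<le> (\<Sum>l\<in>UNIV. \<Sum>k\<in>UNIV. \<bar>W $ k $ i\<bar> * \<bar>W $ l $ j\<bar> * \<bar>G $ k $ l\<bar>)"
    by (rule order_trans[OF sum_abs sum_mono], rule order_trans[OF sum_abs sum_mono])
      (simp add: abs_mult ac_simps)
  also have "\<dots> \<le> (\<Sum>l\<in>UNIV. \<Sum>k\<in>UNIV. c * \<bar>G $ k $ l\<bar>)"
    by (intro sum_mono mult_right_mono abs_mult_le_of_squares_le W) simp
  also have "\<dots> = c * entry_norm1 G"
    unfolding entry_norm1_def sum_distrib_left by (rule sum.swap)
  finally show ?thesis .
qed

locale principal_inverse =
  fixes A H :: "real^'n^'n" and S :: "'n set"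
  assumes inverse_on_S: "\<forall>i\<in>S. \<forall>j\<in>S. (\<Sum>k\<in>S. A $ i $ k * H $ k $ j) = (if i = j then 1 else 0)"
    and zero_off_S: "\<forall>i j. i \<notin> S \<or> j \<notin> S \<longrightarrow> H $ i $ j = 0"
begin

lemma mult_H_col_notin_S: "j \<notin> S \<Longrightarrow> (X ** H) $ k $ j = 0"
  using zero_off_S by (simp add: matrix_matrix_mult_def)

lemma A_mult_H_row_in_S:
  assumes "i \<in> S"
  shows "(A ** H) $ i $ j = (if i = j then 1 else 0)"
proof (cases "j \<in> S")
  case True
  have "(A ** H) $ i $ j = (\<Sum>k\<in>S. A $ i $ k * H $ k $ j)"
    unfolding matrix_matrix_mult_def vec_lambda_beta
    by (rule sum.mono_neutral_right) (auto simp: zero_off_S)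
  then show ?thesis
    using inverse_on_S assms True by simp
next
  case False
  then show ?thesis
    using assms mult_H_col_notin_S by auto
qed

lemma transpose_H_mult_A_H: "transpose H ** A ** H = transpose H"
proof -
  define W where "W = A ** H"
  have "(transpose H ** W) $ i $ j = H $ j $ i" for i j
  proof -
    have "(transpose H ** W) $ i $ j = (\<Sum>k\<in>S. H $ k $ i * W $ k $ j)"
      unfolding matrix_matrix_mult_def transpose_def vec_lambda_beta
      by (rule sum.mono_neutral_right) (auto simp: zero_off_S)
    also have "\<dots> = (\<Sum>k\<in>S. if k = j then H $ k $ i else 0)"
      by (intro sum.cong) (auto simp: W_def A_mult_H_row_in_S)
    also have "\<dots> = H $ j $ i"
      by (simp add: sum.delta' zero_off_S)
    finally show ?thesis .
  qed
  then show ?thesis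
    by (simp add: W_def vec_eq_iff transpose_def matrix_mul_assoc)
qed

lemma A_mult_H_mult_A:
  assumes "card S = rank A"
  shows "A ** H ** A = A"
  using ginv_if_right_inverse_on_rank_rows A_mult_H_row_in_S assms by blast

lemma card_nonzero_entries_H: "card {(i, j). H $ i $ j \<noteq> 0} \<le> card S ^ 2"
proof -
  have "card {(i, j). H $ i $ j \<noteq> 0} \<le> card (S \<times> S)"
    using zero_off_S by (intro card_mono) auto
  then show ?thesis
    by (simp add: card_cartesian_product power2_eq_square)
qed

lemma entry_norm1_H_le:
  assumes "\<And>i j. \<bar>H $ i $ j\<bar> \<le> b"
  shows "entry_norm1 H \<le> real (card S ^ 2) * b"
proof -
  have "entry_norm1 H = (\<Sum>i\<in>UNIV. \<Sum>j\<in>S. \<bar>H $ i $ j\<bar>)"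
    unfolding entry_norm1_def
    by (intro sum.cong refl sum.mono_neutral_right) (auto simp: zero_off_S)
  also have "\<dots> = (\<Sum>i\<in>S. \<Sum>j\<in>S. \<bar>H $ i $ j\<bar>)"
    by (intro sum.mono_neutral_right) (auto simp: zero_off_S)
  also have "\<dots> \<le> (\<Sum>i\<in>S. \<Sum>j\<in>S. b)"
    by (intro sum_mono assms)
  finally show ?thesis
    by (simp add: power2_eq_square)
qed

end

locale sym_principal_inverse = principal_inverse +
  assumes symmetric: "transpose A = A"
begin

lemma transpose_H: "transpose H = H"
proof -
  have "H = transpose (transpose H ** A ** H)"
    by (simp add: transpose_H_mult_A_H)
  also have "\<dots> = transpose H ** A ** H"
    by (simp add: matrix_transpose_mul symmetric matrix_mul_assoc)
  also have "\<dots> = transpose H"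
    by (rule transpose_H_mult_A_H)
  finally show ?thesis
    by simp
qed

lemma H_mult_A_mult_H: "H ** A ** H = H"
  using transpose_H_mult_A_H by (simp add: transpose_H)

lemma A_mult_H_entry_sq_le:
  assumes rank: "card S = rank A" and local_max: "local_max_det eps A S" and eps: "eps \<ge> 0"
  shows "((A ** H) $ k $ i)^2 \<le> 1 + eps"
proof -
  consider "i \<notin> S" | "k \<in> S" | "i \<in> S" "k \<notin> S" by blast
  then show ?thesis
  proof cases
    case 1
    then show ?thesis using eps by (simp add: mult_H_col_notin_S)
  next
    case 2
    then show ?thesis using eps by (simp add: A_mult_H_row_in_S)
  next
    case 3
    have "A = (A ** H) ** A ** transpose (A ** H)"
      using A_mult_H_mult_A[OF rank]
      by (metis matrix_mul_assoc matrix_transpose_mul symmetric transpose_H)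
    then have "principal_det A (insert k (S - {i}))
        = ((A ** H) $ k $ i)^2 * principal_det A S"
      using 3 by (intro principal_det_exchange) (auto simp: A_mult_H_row_in_S mult_H_col_notin_S)
    moreover have "\<bar>principal_det A (insert k (S - {i}))\<bar> \<le> (1 + eps) * \<bar>principal_det A S\<bar>"
      using local_max 3 unfolding local_max_det_def by blast
    moreover have "\<bar>principal_det A S\<bar> > 0"
      using local_max unfolding local_max_det_def by simp
    ultimately show ?thesis
      by (simp add: abs_mult)
  qed
qed

lemma entry_norm1_H_le_ginv:
  assumes "card S = rank A" and "local_max_det eps A S" and "eps \<ge> 0"
    and ginv: "A ** G ** A = A"
  shows "entry_norm1 H \<le> real (card S ^ 2) * ((1 + eps) * entry_norm1 G)"
proof (rule entry_norm1_H_le)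
  have "H = (H ** A) ** G ** (A ** H)"
    using H_mult_A_mult_H ginv by (metis matrix_mul_assoc)
  also have "H ** A = transpose (A ** H)"
    by (simp add: matrix_transpose_mul transpose_H symmetric)
  finally have "H = transpose (A ** H) ** G ** (A ** H)" .
  then show "\<bar>H $ i $ j\<bar> \<le> (1 + eps) * entry_norm1 G" for i j
    using abs_congruence_entry_le A_mult_H_entry_sq_le assms by metis
qed

end

theorem theorem2p6:
  fixes A H :: "real^'n^'n" and S :: "'n set" and eps :: real
  assumes symA: "transpose A = A"
    and rank_pos: "rank A \<ge> 1"
    and eps: "eps \<ge> 0"
    and cardS: "card S = rank A"
    and locmax: "local_max_det eps A S"
    and H_inv: "\<forall>i\<in>S. \<forall>j\<in>S. (\<Sum>k\<in>S. A $ i $ k * H $ k $ j) = (if i = j then 1 else 0)"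
    and H_zero: "\<forall>i j. i \<notin> S \<or> j \<notin> S \<longrightarrow> H $ i $ j = 0"
  shows "transpose H = H \<and> is_reflexive_ginv A H
    \<and> card {(i, j). H $ i $ j \<noteq> 0} \<le> (rank A)^2
    \<and> (\<forall>G. transpose G = G \<and> is_reflexive_ginv A G \<longrightarrow>
          entry_norm1 H \<le> real ((rank A)^2) * (1 + eps) * entry_norm1 G)"
proof -
  interpret sym_principal_inverse A H S
    using H_inv H_zero symA by unfold_locales
  have "entry_norm1 H \<le> real ((rank A)^2) * (1 + eps) * entry_norm1 G"
    if "is_ginv A G" for G
    using entry_norm1_H_le_ginv[OF cardS locmax eps] that cardS
    by (simp add: is_ginv_def mult.assoc)
  then show ?thesis
    using transpose_H H_mult_A_mult_H A_mult_H_mult_A[OF cardS] card_nonzero_entries_H cardS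
    by (auto simp: is_reflexive_ginv_def is_ginv_def)
qed

end
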